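(* There exist six hyperplanes $W_1,\dots,W_6\subset\mathbb R^4$ which do phase retrieval on $\mathbb R^4$, but such that the one-dimensional subspaces $\{W_i^\perp\}_{i=1}^6$ do not do phase retrieval on $\mathbb R^4$.
   Context: A hyperplane in $\mathbb R^4$ is a 3-dimensional subspace. A family of subspaces $\{W_i\}$ with orthogonal projections $P_i$ does phase retrieval if whenever $x,y\in\mathbb R^4$ satisfy $\|P_ix\|=\|P_iy\|$ for all $i$, then $x=\pm y$. *)

theory Defs
  imports "HOL-Analysis.Analysis"
begin

definition orth_proj :: "'a::euclidean_space set \<Rightarrow> 'a \<Rightarrow> 'a" where
  "orth_proj W x = (THE p. p \<in> W \<and> (\<forall>w\<in>W. orthogonal (x - p) w))"

definition does_phase_retrieval :: "'i set \<Rightarrow> ('i \<Rightarrow> 'a::euclidean_space set) \<Rightarrow> bool" where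
  "does_phase_retrieval I W \<longleftrightarrow>
     (\<forall>x y. (\<forall>i\<in>I. norm (orth_proj (W i) x) = norm (orth_proj (W i) y)) \<longrightarrow> x = y \<or> x = - y)"

definition hyperplane4 :: "(real^4) set \<Rightarrow> bool" where
  "hyperplane4 W \<longleftrightarrow> subspace W \<and> dim W = 3"

end

theory Submission
  imports Defs
begin

text \<open>
  For hyperplanes \<open>v\<^sub>i\<^sup>\<perp>\<close>, equality of the projection norms of \<open>x\<close> and \<open>y\<close> says that the
  symmetric matrix \<open>M = x x\<^sup>T - y y\<^sup>T\<close> satisfies the six linear conditions
  \<open>\<parallel>v\<^sub>i\<parallel>\<^sup>2 tr M = v\<^sub>i\<^sup>T M v\<^sub>i\<close>. For the chosen normals these cut out a four-dimensional space of
  symmetric matrices, parametrised by the entries \<open>m\<^sub>2\<^sub>4, m\<^sub>3\<^sub>3, m\<^sub>3\<^sub>4, m\<^sub>4\<^sub>4\<close>, and \<open>M\<close> has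
  rank at most two, so all its \<open>3 \<times> 3\<close> minors vanish. A Positivstellensatz certificate
  (linear multiples of ten minors summing to \<open>5000 \<parallel>m\<parallel>\<^sup>4\<close> plus a sum of nonnegative
  binary quadratic forms) shows that the only such matrix is \<open>0\<close>, whence \<open>x = \<plusminus>y\<close>.
  The orthogonal complements are six lines in \<open>\<real>\<^sup>4\<close>, which never do phase retrieval
  (that needs at least seven); an explicit pair \<open>x, y\<close> witnesses this.
\<close>

lemma orth_proj_eqI:
  fixes S :: "'a::euclidean_space set"
  assumes "subspace S" "p \<in> S" "\<And>w. w \<in> S \<Longrightarrow> orthogonal (x - p) w"
  shows "orth_proj S x = p"
  unfolding orth_proj_def
proof (rule the_equality)
  show "p \<in> S \<and> (\<forall>w\<in>S. orthogonal (x - p) w)"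
    using assms by blast
next
  fix q assume q: "q \<in> S \<and> (\<forall>w\<in>S. orthogonal (x - q) w)"
  have "q - p \<in> S"
    using assms(1,2) q subspace_diff by blast
  then have "(x - p) \<bullet> (q - p) = 0" "(x - q) \<bullet> (q - p) = 0"
    using assms(3) q by (auto simp: orthogonal_def)
  then have "((x - p) - (x - q)) \<bullet> (q - p) = 0"
    by (simp only: inner_diff_left)
  then show "q = p"
    by simp
qed

lemma orth_proj_hyperplane:
  fixes v x :: "'a::euclidean_space"
  shows "orth_proj {z. v \<bullet> z = 0} x = x - ((v \<bullet> x) / (v \<bullet> v)) *\<^sub>R v"
proof (rule orth_proj_eqI)
  show "subspace {z. v \<bullet> z = 0}"
    by (rule subspace_hyperplane)
  show "x - ((v \<bullet> x) / (v \<bullet> v)) *\<^sub>R v \<in> {z. v \<bullet> z = 0}"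
    by (cases "v = 0") (simp_all add: inner_diff_right)
  show "orthogonal (x - (x - ((v \<bullet> x) / (v \<bullet> v)) *\<^sub>R v)) w" if "w \<in> {z. v \<bullet> z = 0}" for w
    using that by (simp add: orthogonal_def)
qed

lemma norm_orth_proj_hyperplane_sq:
  fixes v x :: "'a::euclidean_space"
  shows "(v \<bullet> v) * (norm (orth_proj {z. v \<bullet> z = 0} x))\<^sup>2 = (v \<bullet> v) * (x \<bullet> x) - (v \<bullet> x)\<^sup>2"
  unfolding orth_proj_hyperplane power2_norm_eq_inner
  by (cases "v = 0")
     (simp_all add: inner_diff_left inner_diff_right inner_commute field_simps power2_eq_square)

lemma orth_proj_span_singleton:
  fixes v x :: "'a::euclidean_space"
  shows "orth_proj (span {v}) x = ((v \<bullet> x) / (v \<bullet> v)) *\<^sub>R v"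
proof (rule orth_proj_eqI)
  show "subspace (span {v})" "((v \<bullet> x) / (v \<bullet> v)) *\<^sub>R v \<in> span {v}"
    by (simp_all add: span_base span_mul)
  fix w assume "w \<in> span {v}"
  then obtain k where "w = k *\<^sub>R v"
    by (auto simp: span_singleton)
  then show "orthogonal (x - ((v \<bullet> x) / (v \<bullet> v)) *\<^sub>R v) w"
    by (cases "v = 0") (simp_all add: orthogonal_def inner_diff_left inner_commute[of x v])
qed

lemma norm_orth_proj_span_singleton:
  fixes v x :: "'a::euclidean_space"
  shows "norm (orth_proj (span {v}) x) = \<bar>v \<bullet> x\<bar> / norm v"
  unfolding orth_proj_span_singleton
  by (cases "v = 0") (simp_all add: power2_norm_eq_inner[symmetric] power2_eq_square)

lemma orthogonal_comp_hyperplane: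
  fixes v :: "'a::euclidean_space"
  shows "orthogonal_comp {z. v \<bullet> z = 0} = span {v}"
proof -
  have "{z. v \<bullet> z = 0} = orthogonal_comp (span {v})"
    by (auto simp: orthogonal_comp_def orthogonal_def span_singleton)
  then show ?thesis
    by (simp add: orthogonal_comp_self)
qed

lemma hyperplane4_hyperplane:
  fixes v :: "real^4"
  assumes "v \<noteq> 0"
  shows "hyperplane4 {z. v \<bullet> z = 0}"
  using dim_hyperplane[OF assms] by (simp add: hyperplane4_def subspace_hyperplane)

lemma does_phase_retrieval_hyperplanesI:
  fixes v :: "'i \<Rightarrow> 'a::euclidean_space"
  assumes "\<And>x y. \<forall>i\<in>I. (v i \<bullet> v i) * (x \<bullet> x) - (v i \<bullet> x)\<^sup>2 = (v i \<bullet> v i) * (y \<bullet> y) - (v i \<bullet> y)\<^sup>2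
                  \<Longrightarrow> x = y \<or> x = - y"
  shows "does_phase_retrieval I (\<lambda>i. {z. v i \<bullet> z = 0})"
  unfolding does_phase_retrieval_def
proof (intro allI impI)
  fix x y
  assume "\<forall>i\<in>I. norm (orth_proj {z. v i \<bullet> z = 0} x) = norm (orth_proj {z. v i \<bullet> z = 0} y)"
  then show "x = y \<or> x = - y"
    by (intro assms) (simp add: norm_orth_proj_hyperplane_sq[symmetric])
qed

lemma not_does_phase_retrieval_lines:
  fixes v :: "'i \<Rightarrow> 'a::euclidean_space"
  assumes "\<forall>i\<in>I. \<bar>v i \<bullet> x\<bar> = \<bar>v i \<bullet> y\<bar>" "x \<noteq> y" "x \<noteq> - y"
  shows "\<not> does_phase_retrieval I (\<lambda>i. span {v i})"
  using assms by (auto simp: does_phase_retrieval_def norm_orth_proj_span_singleton)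

definition outer_diff :: "real^'n \<Rightarrow> real^'n \<Rightarrow> real^'n^'n" where
  "outer_diff x y = (\<chi> i j. x $ i * x $ j - y $ i * y $ j)"

definition hyperplane_pairing :: "real^'n \<Rightarrow> real^'n^'n \<Rightarrow> real" where
  "hyperplane_pairing v M = (v \<bullet> v) * trace M - v \<bullet> (M *v v)"

definition minor3 :: "'a::comm_ring^'n^'n \<Rightarrow> 'n \<times> 'n \<times> 'n \<Rightarrow> 'n \<times> 'n \<times> 'n \<Rightarrow> 'a" where
  "minor3 M = (\<lambda>(i, j, k) (p, q, r).
     M$i$p * (M$j$q * M$k$r - M$j$r * M$k$q) - M$i$q * (M$j$p * M$k$r - M$j$r * M$k$p)
       + M$i$r * (M$j$p * M$k$q - M$j$q * M$k$p))"

lemma transpose_outer_diff: "transpose (outer_diff x y) = outer_diff x y"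
  by (simp add: outer_diff_def transpose_def mult.commute)

lemma hyperplane_pairing_outer_diff:
  "hyperplane_pairing v (outer_diff x y)
     = ((v \<bullet> v) * (x \<bullet> x) - (v \<bullet> x)\<^sup>2) - ((v \<bullet> v) * (y \<bullet> y) - (v \<bullet> y)\<^sup>2)"
proof -
  have trace: "trace (outer_diff x y) = x \<bullet> x - y \<bullet> y"
    by (simp add: trace_def outer_diff_def inner_vec_def sum_subtractf)
  have apply_v: "outer_diff x y *v v = (x \<bullet> v) *\<^sub>R x - (y \<bullet> v) *\<^sub>R y"
    by (simp add: vec_eq_iff outer_diff_def matrix_vector_mult_def inner_vec_def
        sum_subtractf sum_distrib_left algebra_simps)
  show ?thesis
    unfolding hyperplane_pairing_def trace apply_v
    by (simp add: inner_diff_right inner_commute power2_eq_square algebra_simps)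
qed

lemma minor3_outer_diff: "minor3 (outer_diff x y) (i, j, k) (p, q, r) = 0"
  unfolding minor3_def outer_diff_def by simp algebra

lemma outer_diff_eq_0D:
  assumes "outer_diff x y = 0"
  shows "x = y \<or> x = - y"
proof (rule ccontr)
  have prod: "x $ i * x $ j = y $ i * y $ j" for i j
    using assms by (simp add: outer_diff_def vec_eq_iff)
  assume "\<not> (x = y \<or> x = - y)"
  then obtain k where "x $ k \<noteq> y $ k"
    by (auto simp: vec_eq_iff)
  with prod[of k k] have "x $ k = - y $ k" "x $ k \<noteq> 0"
    by (auto simp: square_eq_iff)
  have "x $ j = - y $ j" for j
  proof -
    have "(x $ j + y $ j) * y $ k = 0"
      using prod[of j k] \<open>x $ k = - y $ k\<close> by (simp add: algebra_simps)
    with \<open>x $ k = - y $ k\<close> \<open>x $ k \<noteq> 0\<close> show ?thesis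
      by (simp add: add_eq_0_iff)
  qed
  then show False
    using \<open>\<not> (x = y \<or> x = - y)\<close> by (simp add: vec_eq_iff)
qed

lemma binary_form_nonneg:
  fixes \<alpha> \<beta> \<gamma> s t :: real
  assumes "0 \<le> \<alpha>" "0 \<le> \<gamma>" "\<beta>\<^sup>2 \<le> \<alpha> * \<gamma>"
  shows "0 \<le> \<alpha> * s\<^sup>2 + 2 * \<beta> * s * t + \<gamma> * t\<^sup>2"
proof (cases "\<alpha> = 0")
  case True
  then show ?thesis
    using assms by simp
next
  case False
  have "\<alpha> * (\<alpha> * s\<^sup>2 + 2 * \<beta> * s * t + \<gamma> * t\<^sup>2) = (\<alpha> * s + \<beta> * t)\<^sup>2 + (\<alpha> * \<gamma> - \<beta>\<^sup>2) * t\<^sup>2"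
    by (simp add: algebra_simps power2_eq_square)
  also have "\<dots> \<ge> 0"
    using assms(3) by simp
  finally show ?thesis
    using False assms(1) by (simp add: zero_le_mult_iff)
qed

definition binary_forms_sum :: "(real \<times> real \<times> real \<times> real \<times> real) list \<Rightarrow> real" where
  "binary_forms_sum fs = (\<Sum>(\<alpha>, \<beta>, \<gamma>, s, t)\<leftarrow>fs. \<alpha> * s\<^sup>2 + 2 * \<beta> * s * t + \<gamma> * t\<^sup>2)"

lemma binary_forms_sum_nonneg:
  assumes "\<forall>(\<alpha>, \<beta>, \<gamma>, _, _) \<in> set fs. 0 \<le> \<alpha> \<and> 0 \<le> \<gamma> \<and> \<beta>\<^sup>2 \<le> \<alpha> * \<gamma>"
  shows "0 \<le> binary_forms_sum fs"
  using assms unfolding binary_forms_sum_def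
proof (induction fs)
  case (Cons f fs)
  then show ?case
    by (cases f) (simp add: add_nonneg_nonneg binary_form_nonneg)
qed simp

lemma vector_4 [simp]:
  "(vector [a, b, c, d] :: 'a::zero^4) $ 1 = a"
  "(vector [a, b, c, d] :: 'a::zero^4) $ 2 = b"
  "(vector [a, b, c, d] :: 'a::zero^4) $ 3 = c"
  "(vector [a, b, c, d] :: 'a::zero^4) $ 4 = d"
  unfolding vector_def by simp_all

definition example_normal :: "nat \<Rightarrow> real^4" where
  "example_normal k = vector ([[1, 1, 1, 0], [1, 1, 1, -1], [0, 1, 0, 0],
                               [1, 1, 0, 2], [0, -1, 1, -1], [-1, 2, 1, 0]] ! (k - 1))"

definition solution_matrix :: "real \<Rightarrow> real \<Rightarrow> real \<Rightarrow> real \<Rightarrow> real^4^4" where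
  "solution_matrix m24 m33 m34 m44 =
     (let m11 = - m33 - m44;
          m12 = 21/17 * m24 + 31/34 * m33 - 1/17 * m34 - 43/34 * m44;
          m13 = - 26/17 * m24 - 20/17 * m33 - 2/17 * m34 + 67/34 * m44;
          m14 = - 20/17 * m24 - 1/17 * m33 - 12/17 * m34 + 11/34 * m44;
          m22 = 6/17 * m24 + 2/17 * m33 - 10/17 * m34 + 6/17 * m44;
          m23 = 11/17 * m24 + 13/34 * m33 - 7/17 * m34 + 5/34 * m44
      in vector [vector [m11, m12, m13, m14], vector [m12, m22, m23, m24],
                 vector [m13, m23, m33, m34], vector [m14, m24, m34, m44]])"

lemma solution_matrix_0: "solution_matrix 0 0 0 0 = 0"
  by (simp add: solution_matrix_def vec_eq_iff forall_4)

lemma solution_space_eq_solution_matrix: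
  fixes M :: "real^4^4"
  assumes "transpose M = M" and "\<forall>k\<in>{1..6}. hyperplane_pairing (example_normal k) M = 0"
  shows "M = solution_matrix (M$2$4) (M$3$3) (M$3$4) (M$4$4)"
proof -
  have "M$j$i = M$i$j" for i j
    using arg_cong[OF assms(1), of "\<lambda>A. A$i$j"] by (simp add: transpose_def)
  then have sym: "M$2$1 = M$1$2" "M$3$1 = M$1$3" "M$4$1 = M$1$4"
                 "M$3$2 = M$2$3" "M$4$2 = M$2$4" "M$4$3 = M$3$4"
    by blast+
  have "hyperplane_pairing (example_normal k) M = 0" if "k \<in> {1..6}" for k
    using assms(2) that by blast
  from this[of 1] this[of 2] this[of 3] this[of 4] this[of 5] this[of 6]
  have "- 2 * M$1$1 + 2 * M$1$2 + 2 * M$1$3 - 2 * M$2$2 + 2 * M$2$3 - 2 * M$3$3 - 3 * M$4$4 = 0"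
       "- 3 * M$1$1 + 2 * M$1$2 + 2 * M$1$3 - 2 * M$1$4 - 3 * M$2$2 + 2 * M$2$3 - 2 * M$2$4
          - 3 * M$3$3 - 2 * M$3$4 - 3 * M$4$4 = 0"
       "- M$1$1 - M$3$3 - M$4$4 = 0"
       "- 5 * M$1$1 + 2 * M$1$2 + 4 * M$1$4 - 5 * M$2$2 + 4 * M$2$4 - 6 * M$3$3 - 2 * M$4$4 = 0"
       "- 3 * M$1$1 - 2 * M$2$2 - 2 * M$2$3 + 2 * M$2$4 - 2 * M$3$3 - 2 * M$3$4 - 2 * M$4$4 = 0"
       "- 5 * M$1$1 - 4 * M$1$2 - 2 * M$1$3 - 2 * M$2$2 + 4 * M$2$3 - 5 * M$3$3 - 6 * M$4$4 = 0"
    by (simp_all add: hyperplane_pairing_def example_normal_def trace_def inner_vec_def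
        matrix_vector_mult_def sum_4 sym algebra_simps)
  then show ?thesis
    unfolding vec_eq_iff forall_4
    by (simp add: solution_matrix_def Let_def sym)
qed

(* The constants of the certificate come from a numerical semidefinite program;
   solution_matrix_certificate checks them exactly. *)
definition minor_multipliers ::
  "real \<Rightarrow> real \<Rightarrow> real \<Rightarrow> real \<Rightarrow> (real \<times> (4 \<times> 4 \<times> 4) \<times> (4 \<times> 4 \<times> 4)) list" where
  "minor_multipliers m24 m33 m34 m44 =
     [(-353736/25 * m33 - 6342683/125 * m44, (1, 2, 3), (1, 2, 3)),
      (-8779531/125 * m24 + 1238076/125 * m33 - 7679019/125 * m44, (1, 2, 3), (1, 2, 4)),
      (-3522621/125 * m33 - 8740227/125 * m34, (1, 2, 3), (1, 3, 4)),
      (4259571/125 * m24 + 6028251/125 * m33 + 5129172/125 * m34 + 24820476/125 * m44, (1, 2, 3), (2, 3, 4)),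
      (-13098058/125 * m24 + 8003277/125 * m34, (1, 2, 4), (1, 2, 4)),
      (-4436439/125 * m33, (1, 2, 4), (1, 3, 4)),
      (18389359/125 * m24 + 8754966/125 * m34 + 6819244/25 * m44, (1, 2, 4), (2, 3, 4)),
      (-2766019/125 * m34 - 722211/25 * m44, (1, 3, 4), (1, 3, 4)),
      (-4136746/25 * m24 - 16959676/125 * m34 - 284954/5 * m44, (1, 3, 4), (2, 3, 4)),
      (7585672/125 * m34, (2, 3, 4), (2, 3, 4))]"

definition square_forms ::
  "real \<Rightarrow> real \<Rightarrow> real \<Rightarrow> real \<Rightarrow> (real \<times> real \<times> real \<times> real \<times> real) list" where
  "square_forms m24 m33 m34 m44 =
     [(502629/1000, - 15239/250, 1032321/1000, m24 * m24, m24 * m33),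
      (138889/250, 5863/250, 22591/20, m24 * m24, m24 * m34),
      (58256271/250, - 21151997/125, 15538702/125, m24 * m24, m24 * m44),
      (113645067/500, - 40441597/1000, 1939339/250, m24 * m24, m33 * m33),
      (138889/250, - 3519/500, 273999/250, m24 * m24, m33 * m34),
      (138889/250, 38123/500, 1089949/1000, m24 * m24, m33 * m44),
      (555557/1000, 0, 68121/125, m24 * m24, m34 * m34),
      (138889/250, - 13509/1000, 1029633/1000, m24 * m24, m34 * m44),
      (138889/250, 0, 578237/1000, m24 * m24, m44 * m44),
      (1111111/1000, 0, 1111111/1000, m24 * m33, m24 * m34),
      (6940563/250, - 9188809/200, 40157149/500, m24 * m33, m24 * m44),
      (1111111/1000, - 12023/500, 138889/250, m24 * m33, m33 * m33),
      (1111111/1000, 873/125, 1111111/1000, m24 * m33, m33 * m34),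
      (1111111/1000, 34371/1000, 1111111/1000, m24 * m33, m33 * m44),
      (1111111/1000, 2803/125, 138889/250, m24 * m33, m34 * m34),
      (1111111/1000, - 797/125, 1111111/1000, m24 * m33, m34 * m44),
      (1111111/1000, - 19883/1000, 138889/250, m24 * m33, m44 * m44),
      (8302729/1000, - 12206363/1000, 10914511/500, m24 * m34, m24 * m44),
      (1111111/1000, 0, 138889/250, m24 * m34, m33 * m33),
      (1111111/1000, 0, 1111111/1000, m24 * m34, m33 * m34),
      (1111111/1000, 0, 1111111/1000, m24 * m34, m33 * m44),
      (1111111/1000, - 3092/125, 138889/250, m24 * m34, m34 * m34),
      (1111111/1000, 35389/1000, 1111111/1000, m24 * m34, m34 * m44),
      (1111111/1000, - 6539/250, 138889/250, m24 * m34, m44 * m44),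
      (277779/250, - 1/1000, 138889/250, m24 * m44, m33 * m33),
      (138889/125, 0, 1111111/1000, m24 * m44, m33 * m34),
      (2024349/40, - 1939492/125, 2987433/500, m24 * m44, m33 * m44),
      (8086149/200, - 8780543/1000, 629089/250, m24 * m44, m34 * m34),
      (138889/125, 0, 1111111/1000, m24 * m44, m34 * m44),
      (138889/125, - 2987/1000, 138889/250, m24 * m44, m44 * m44),
      (138889/250, 15271/1000, 1111111/1000, m33 * m33, m33 * m34),
      (3946183/1000, - 8645879/2000, 6662347/1000, m33 * m33, m33 * m44),
      (7333547/1000, - 6178631/1000, 3093913/500, m33 * m33, m34 * m34),
      (138889/250, - 4229/200, 1111111/1000, m33 * m33, m34 * m44),
      (138889/250, 0, 138889/250, m33 * m33, m44 * m44),
      (5464573/1000, - 46675/8, 223254/25, m33 * m34, m33 * m44),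
      (1111111/1000, - 1983/125, 138889/250, m33 * m34, m34 * m34),
      (1111111/1000, 27821/1000, 1111111/1000, m33 * m34, m34 * m44),
      (1111111/1000, 1687/80, 138889/250, m33 * m34, m44 * m44),
      (7363391/250, - 10095863/500, 7470271/500, m33 * m44, m34 * m34),
      (138889/125, 0, 138889/125, m33 * m44, m34 * m44),
      (1111111/1000, - 19347/2000, 138889/250, m33 * m44, m44 * m44),
      (549961/250, - 1053061/500, 96584/25, m34 * m34, m34 * m44),
      (138889/250, 0, 138889/250, m34 * m34, m44 * m44),
      (138889/125, 5137/400, 138889/250, m34 * m44, m44 * m44)]"

lemma solution_matrix_certificate:
  "(\<Sum>(l, I, J)\<leftarrow>minor_multipliers m24 m33 m34 m44. l * minor3 (solution_matrix m24 m33 m34 m44) I J)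
     = 5000 * (m24\<^sup>2 + m33\<^sup>2 + m34\<^sup>2 + m44\<^sup>2)\<^sup>2 + binary_forms_sum (square_forms m24 m33 m34 m44)"
  unfolding minor_multipliers_def square_forms_def minor3_def solution_matrix_def
    binary_forms_sum_def Let_def
  by (simp only: list.map sum_list_simps prod.case vector_4) algebra

lemma square_forms_nonneg: "0 \<le> binary_forms_sum (square_forms m24 m33 m34 m44)"
  by (rule binary_forms_sum_nonneg) (simp add: square_forms_def power2_eq_square)

lemma solution_matrix_minors_eq_0D:
  assumes "\<And>i j k p q r. minor3 (solution_matrix m24 m33 m34 m44) (i, j, k) (p, q, r) = 0"
  shows "m24 = 0 \<and> m33 = 0 \<and> m34 = 0 \<and> m44 = 0"
proof -
  have "(\<Sum>(l, I, J)\<leftarrow>minor_multipliers m24 m33 m34 m44. l * minor3 (solution_matrix m24 m33 m34 m44) I J) = 0"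
    by (simp add: minor_multipliers_def assms)
  then have "5000 * (m24\<^sup>2 + m33\<^sup>2 + m34\<^sup>2 + m44\<^sup>2)\<^sup>2 \<le> 0"
    using solution_matrix_certificate square_forms_nonneg by (metis le_add_same_cancel1)
  then have "m24\<^sup>2 + m33\<^sup>2 + m34\<^sup>2 + m44\<^sup>2 = 0"
    by simp
  then show ?thesis
    by (smt (verit) power2_less_eq_zero_iff zero_le_power2)
qed

lemma example_normal_nonzero:
  assumes "k \<in> {1..6}"
  shows "example_normal k \<noteq> 0"
proof -
  have "k \<in> {1, 2, 3, 4, 5, 6}"
    using assms by auto
  then have "example_normal k $ 1 \<noteq> 0 \<or> example_normal k $ 2 \<noteq> 0"
    by (auto simp: example_normal_def)
  then show ?thesis
    by auto
qed

lemma example_hyperplanes_phase_retrieval: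
  fixes x y :: "real^4"
  assumes "\<forall>k\<in>{1..6}. (example_normal k \<bullet> example_normal k) * (x \<bullet> x) - (example_normal k \<bullet> x)\<^sup>2
                     = (example_normal k \<bullet> example_normal k) * (y \<bullet> y) - (example_normal k \<bullet> y)\<^sup>2"
  shows "x = y \<or> x = - y"
proof -
  have "\<forall>k\<in>{1..6}. hyperplane_pairing (example_normal k) (outer_diff x y) = 0"
    using assms by (simp add: hyperplane_pairing_outer_diff)
  from solution_space_eq_solution_matrix[OF transpose_outer_diff this]
  obtain m24 m33 m34 m44 where M: "outer_diff x y = solution_matrix m24 m33 m34 m44"
    by blast
  have "minor3 (solution_matrix m24 m33 m34 m44) (i, j, k) (p, q, r) = 0" for i j k p q r
    using minor3_outer_diff[of x y] by (simp only: M)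
  then have "m24 = 0 \<and> m33 = 0 \<and> m34 = 0 \<and> m44 = 0"
    by (rule solution_matrix_minors_eq_0D)
  with M have "outer_diff x y = 0"
    by (simp add: solution_matrix_0)
  then show ?thesis
    by (rule outer_diff_eq_0D)
qed

theorem mainTheorem9:
  shows "\<exists>W :: nat \<Rightarrow> (real^4) set.
           (\<forall>i\<in>{1..6}. hyperplane4 (W i)) \<and>
           does_phase_retrieval {1..6} W \<and>
           \<not> does_phase_retrieval {1..6} (\<lambda>i. orthogonal_comp (W i))"
proof (intro exI[of _ "\<lambda>k. {z. example_normal k \<bullet> z = 0}"] conjI)
  show "\<forall>k\<in>{1..6}. hyperplane4 {z. example_normal k \<bullet> z = 0}"
    by (simp add: hyperplane4_hyperplane example_normal_nonzero)
  show "does_phase_retrieval {1..6} (\<lambda>k. {z. example_normal k \<bullet> z = 0})"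
    by (rule does_phase_retrieval_hyperplanesI) (rule example_hyperplanes_phase_retrieval)
  let ?x = "vector [6, 3, -2, -4] :: real^4" and ?y = "vector [-4, -3, 0, 4] :: real^4"
  have "{1..6} = {1, 2, 3, 4, 5, 6 :: nat}"
    by auto
  then have "\<forall>k\<in>{1..6}. \<bar>example_normal k \<bullet> ?x\<bar> = \<bar>example_normal k \<bullet> ?y\<bar>"
    by (simp add: example_normal_def inner_vec_def sum_4)
  moreover have "?x $ 3 \<noteq> ?y $ 3" "?x $ 1 \<noteq> (- ?y) $ 1"
    by simp_all
  then have "?x \<noteq> ?y" "?x \<noteq> - ?y"
    by metis+
  ultimately show "\<not> does_phase_retrieval {1..6} (\<lambda>k. orthogonal_comp {z. example_normal k \<bullet> z = 0})"
    unfolding orthogonal_comp_hyperplane by (rule not_does_phase_retrieval_lines)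
qed

end
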